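(* Let $f\in P_k^n$ with $2\le ess(f)=n\le k$. Then (i) $\frac{n(n-1)}{2}\le cmr(f)\le \frac{n!(n-1)!}{2^{n-2}}$; (ii) $1\le mnr(f)\le \frac{n!(n-1)!}{2^{n-2}}$.
   Context: $Z_k=\{0,\dots,k-1\}$; $P_k^n$ is the set of all maps $Z_k^n\to Z_k$ in variables $x_1,\dots,x_n$. A variable $x_i$ is essential in $f$ if changing only the $i$-th argument can change the value of $f$; $Ess(f)$ is the set of essential variables, $ess(f)=|Ess(f)|$. For distinct essential $x_i,x_j$, $f_{i\leftarrow j}(a_1,\dots,a_n)=f(a_1,\dots,a_{i-1},a_j,a_{i+1},\dots,a_n)$; $f\rhd h$ means $h=f_{i\leftarrow j}$ for some such $i,j$; $Mnr(f)$ is the set of functions obtained from $f$ by one or more steps of $\rhd$. Two functions are equivalent ($\equiv$) if one is obtained from the other by permuting variables and introducing/deleting inessential variables; $mnr(f)$ is the number of $\equiv$-classes of distinct minors in $Mnr(f)$. The complexity $cmr$ is defined recursively: $cmr(f)=1$ if $ess(f)\le1$; $cmr(f)=2$ if $ess(f)=2$; and $cmr(f)=\sum_{j<i,\ x_i,x_j\in Ess(f)} cmr(f_{i\leftarrow j})$ if $ess(f)\ge3$. *)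

theory Defs
  imports Complex_Main "HOL-Combinatorics.Permutations"
begin

text \<open>Variables x_1,...,x_n are indexed 0,...,n-1. A tuple in Z_k^n is a map
  a :: nat => nat with a i < k for i < n and a i = 0 for i >= n.
  A function in P_k^n is a map f :: (nat => nat) => nat whose values on tuples lie in Z_k
  (values outside tuples are irrelevant).\<close>

definition tuples :: "nat \<Rightarrow> nat \<Rightarrow> (nat \<Rightarrow> nat) set" where
  "tuples k n = {a. (\<forall>i<n. a i < k) \<and> (\<forall>i\<ge>n. a i = 0)}"

definition P :: "nat \<Rightarrow> nat \<Rightarrow> ((nat \<Rightarrow> nat) \<Rightarrow> nat) set" where
  "P k n = {f. \<forall>a\<in>tuples k n. f a < k}"

definition essential :: "nat \<Rightarrow> nat \<Rightarrow> ((nat \<Rightarrow> nat) \<Rightarrow> nat) \<Rightarrow> nat \<Rightarrow> bool" where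
  "essential k n f i \<longleftrightarrow> i < n \<and>
     (\<exists>a\<in>tuples k n. \<exists>b\<in>tuples k n. (\<forall>j. j \<noteq> i \<longrightarrow> a j = b j) \<and> f a \<noteq> f b)"

definition Ess :: "nat \<Rightarrow> nat \<Rightarrow> ((nat \<Rightarrow> nat) \<Rightarrow> nat) \<Rightarrow> nat set" where
  "Ess k n f = {i. essential k n f i}"

definition ess :: "nat \<Rightarrow> nat \<Rightarrow> ((nat \<Rightarrow> nat) \<Rightarrow> nat) \<Rightarrow> nat" where
  "ess k n f = card (Ess k n f)"

definition ident :: "((nat \<Rightarrow> nat) \<Rightarrow> nat) \<Rightarrow> nat \<Rightarrow> nat \<Rightarrow> ((nat \<Rightarrow> nat) \<Rightarrow> nat)" where
  "ident f i j = (\<lambda>a. f (a(i := a j)))"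

definition minor_step :: "nat \<Rightarrow> nat \<Rightarrow> ((nat \<Rightarrow> nat) \<Rightarrow> nat) \<Rightarrow> ((nat \<Rightarrow> nat) \<Rightarrow> nat) \<Rightarrow> bool" where
  "minor_step k n f h \<longleftrightarrow> (\<exists>i j. i \<noteq> j \<and> i \<in> Ess k n f \<and> j \<in> Ess k n f \<and> h = ident f i j)"

definition Mnr :: "nat \<Rightarrow> nat \<Rightarrow> ((nat \<Rightarrow> nat) \<Rightarrow> nat) \<Rightarrow> ((nat \<Rightarrow> nat) \<Rightarrow> nat) set" where
  "Mnr k n f = {h. (minor_step k n)\<^sup>+\<^sup>+ f h}"

text \<open>Equivalence within P_k^n: g and h agree on tuples up to a permutation of the n variables
  (permuting variables and adding/deleting inessential ones, for functions of the same arity).\<close>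
definition fequiv :: "nat \<Rightarrow> nat \<Rightarrow> ((nat \<Rightarrow> nat) \<Rightarrow> nat) \<Rightarrow> ((nat \<Rightarrow> nat) \<Rightarrow> nat) \<Rightarrow> bool" where
  "fequiv k n g h \<longleftrightarrow> (\<exists>\<pi>. \<pi> permutes {..<n} \<and> (\<forall>a\<in>tuples k n. h a = g (a \<circ> \<pi>)))"

definition mnr :: "nat \<Rightarrow> nat \<Rightarrow> ((nat \<Rightarrow> nat) \<Rightarrow> nat) \<Rightarrow> nat" where
  "mnr k n f = card {C. \<exists>g\<in>Mnr k n f. C = {h\<in>Mnr k n f. fequiv k n g h}}"

text \<open>cmr, defined with a fuel argument m; since identification strictly decreases the number of
  essential variables, fuel n suffices (ess f <= n).\<close>
fun cmr_aux :: "nat \<Rightarrow> nat \<Rightarrow> nat \<Rightarrow> ((nat \<Rightarrow> nat) \<Rightarrow> nat) \<Rightarrow> nat" where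
  "cmr_aux k n 0 f = (if ess k n f \<le> 1 then 1 else if ess k n f = 2 then 2 else 0)"
| "cmr_aux k n (Suc m) f = (if ess k n f \<le> 1 then 1 else if ess k n f = 2 then 2 else
     (\<Sum>(i, j)\<in>{(i, j). j < i \<and> i \<in> Ess k n f \<and> j \<in> Ess k n f}. cmr_aux k n m (ident f i j)))"

definition cmr :: "nat \<Rightarrow> nat \<Rightarrow> ((nat \<Rightarrow> nat) \<Rightarrow> nat) \<Rightarrow> nat" where
  "cmr k n f = cmr_aux k n n f"

end

theory Submission
  imports Defs
begin

text \<open>Identifying two essential variables of \<open>g\<close> removes at least one essential variable,
  and for \<open>e = ess g \<ge> 3\<close> the recursion for \<open>cmr\<close> sums over the \<open>e choose 2\<close> pairs of essential
  variables. By induction, every value of \<open>cmr\<close> is at least 1, so \<open>cmr g \<ge> e choose 2\<close>; and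
  \<open>cmr g \<le> B e\<close> for \<open>B e = e! (e - 1)! / 2^(e - 2)\<close>, because \<open>B (e + 1) = (e + 1 choose 2) B e\<close>.

  Every minor of \<open>f\<close> has the form \<open>\<lambda>a. f (a \<circ> s)\<close> for a map \<open>s\<close> of the variable indices into
  themselves. Such an \<open>s\<close> factors as a permutation after a canonical map \<open>c\<close> with \<open>c x \<le> x\<close>,
  and permuting variables preserves the equivalence class, so there are at most
  \<open>n! \<le> B n\<close> classes of minors.\<close>

lemma double_choose_two: "2 * (n choose 2) = n * (n - 1)"
  by (induction n) (auto simp: numeral_2_eq_2 algebra_simps)

lemma real_choose_two: "real (n choose 2) = real (n * (n - 1)) / 2"
  using arg_cong[OF double_choose_two[of n], of real] by (simp add: mult.commute)

lemma two_power_le_fact_Suc: "2 ^ m \<le> (fact (Suc m) :: nat)"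
  by (induction m) (auto simp: mult_mono)

lemma card_ordered_pairs:
  fixes E :: "'a::linorder set"
  assumes "finite E"
  shows "card {(i, j). j < i \<and> i \<in> E \<and> j \<in> E} = card E choose 2"
proof -
  have "bij_betw (\<lambda>(i, j). {i, j}) {(i, j). j < i \<and> i \<in> E \<and> j \<in> E} {A. A \<subseteq> E \<and> card A = 2}"
    (is "bij_betw ?f ?S _")
  proof (rule bij_betwI')
    show "\<And>p q. p \<in> ?S \<Longrightarrow> q \<in> ?S \<Longrightarrow> (?f p = ?f q) = (p = q)"
      by (auto simp: doubleton_eq_iff)
    show "\<And>p. p \<in> ?S \<Longrightarrow> ?f p \<in> {A. A \<subseteq> E \<and> card A = 2}"
      by auto
    fix A assume "A \<in> {A. A \<subseteq> E \<and> card A = 2}"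
    then obtain x y where "A = {x, y}" "x \<in> E" "y \<in> E" "x \<noteq> y"
      by (auto simp: card_2_iff)
    then show "\<exists>p\<in>?S. A = ?f p"
      by (intro bexI[of _ "(max x y, min x y)"]) (auto simp: max_def min_def)
  qed
  then show ?thesis
    using n_subsets[OF assms, of 2] by (simp add: bij_betw_same_card)
qed

lemma exists_permutes_extending:
  assumes "finite S" "L \<subseteq> S" "inj_on t L" "t ` L \<subseteq> S"
  obtains \<pi> where "\<pi> permutes S" "\<And>x. x \<in> L \<Longrightarrow> \<pi> x = t x"
proof -
  have "card (S - L) = card (S - t ` L)"
    using assms by (simp add: card_Diff_subset card_image finite_subset)
  then obtain \<sigma> where \<sigma>: "bij_betw \<sigma> (S - L) (S - t ` L)"
    using finite_same_card_bij assms(1) by blast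
  define \<pi> where "\<pi> x = (if x \<in> L then t x else if x \<in> S then \<sigma> x else x)" for x
  have "bij_betw \<pi> L (t ` L)"
    using assms(3) by (simp add: bij_betw_def \<pi>_def inj_on_def image_def)
  moreover have "bij_betw \<pi> (S - L) (S - t ` L)"
    using \<sigma> by (rule bij_betw_cong[THEN iffD1, rotated]) (simp add: \<pi>_def)
  ultimately have "bij_betw \<pi> (L \<union> (S - L)) (t ` L \<union> (S - t ` L))"
    by (rule bij_betw_combine) blast
  then have "bij_betw \<pi> S S"
    using assms(2,4) by (simp add: Un_absorb1 Un_Diff_cancel)
  then have "\<pi> permutes S"
    by (rule bij_imp_permutes) (use assms(2) in \<open>auto simp: \<pi>_def\<close>)
  then show ?thesis
    using that by (simp add: \<pi>_def)
qed

text \<open>With truncated subtraction \<open>cmr_bound 0 = cmr_bound 1 = 1\<close> and \<open>cmr_bound 2 = 2\<close>,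
  the base values of \<open>cmr\<close>.\<close>

definition cmr_bound :: "nat \<Rightarrow> real" where
  "cmr_bound e = fact e * fact (e - 1) / 2 ^ (e - 2)"

lemma cmr_bound_nonneg: "0 \<le> cmr_bound e"
  by (simp add: cmr_bound_def)

lemma cmr_bound_Suc:
  assumes "2 \<le> e"
  shows "cmr_bound (Suc e) = (Suc e choose 2) * cmr_bound e"
proof -
  have "fact e = real e * fact (e - 1)"
    using assms by (simp add: fact_reduce)
  moreover have "(2::real) ^ (Suc e - 2) = 2 * 2 ^ (e - 2)"
    using assms by (metis Suc_diff_le power_Suc)
  ultimately show ?thesis
    by (simp add: cmr_bound_def real_choose_two algebra_simps)
qed

lemma cmr_bound_mono: "e \<le> e' \<Longrightarrow> cmr_bound e \<le> cmr_bound e'"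
proof (induction e' rule: dec_induct)
  case (step e')
  have "cmr_bound e' \<le> cmr_bound (Suc e')"
  proof (cases "2 \<le> e'")
    case True
    have "1 \<le> Suc e' choose 2" using True by (simp add: choose_two)
    then show ?thesis
      using cmr_bound_Suc[OF True] cmr_bound_nonneg[of e'] by (simp add: mult_le_cancel_right1)
  next
    case False
    then consider "e' = 0" | "e' = 1" by linarith
    then show ?thesis by cases (simp_all add: cmr_bound_def)
  qed
  then show ?case using step.IH by linarith
qed simp

lemma fact_le_cmr_bound: "fact e \<le> cmr_bound e"
proof (cases "2 \<le> e")
  case True
  then have "fact (Suc (e - 2)) = (fact (e - 1) :: real)"
    by (simp add: Suc_diff_Suc numeral_2_eq_2)
  then have "(2::real) ^ (e - 2) \<le> fact (e - 1)"
    using two_power_le_fact_Suc[of "e - 2"]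
    by (metis of_nat_fact of_nat_le_iff of_nat_numeral of_nat_power)
  then show ?thesis
    by (simp add: cmr_bound_def field_simps mult_left_mono)
next
  case False
  then consider "e = 0" | "e = 1" by linarith
  then show ?thesis by cases (simp_all add: cmr_bound_def)
qed

lemma Ess_subset_lessThan: "Ess k n f \<subseteq> {..<n}"
  by (auto simp: Ess_def essential_def)

lemma finite_Ess: "finite (Ess k n f)"
  by (rule finite_subset[OF Ess_subset_lessThan]) simp

lemma fun_upd_in_tuples:
  assumes "a \<in> tuples k n" "i < n" "j < n"
  shows "a(i := a j) \<in> tuples k n"
  using assms by (auto simp: tuples_def)

lemma Ess_ident_subset:
  assumes i: "i \<in> Ess k n g" and j: "j \<in> Ess k n g" and "i \<noteq> j"
  shows "Ess k n (ident g i j) \<subseteq> Ess k n g - {i}"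
proof
  fix l assume "l \<in> Ess k n (ident g i j)"
  then obtain a b where l: "l < n" and ab: "a \<in> tuples k n" "b \<in> tuples k n"
    and agree: "\<forall>x. x \<noteq> l \<longrightarrow> a x = b x" and differ: "g (a(i := a j)) \<noteq> g (b(i := b j))"
    unfolding Ess_def essential_def ident_def mem_Collect_eq by blast
  have "i < n" "j < n" using i j Ess_subset_lessThan by blast+
  then have tuples: "a(i := a j) \<in> tuples k n" "b(i := b j) \<in> tuples k n"
    using ab fun_upd_in_tuples by blast+
  have "l \<noteq> i"
  proof
    assume "l = i"
    then have "a(i := a j) = b(i := b j)" using agree \<open>i \<noteq> j\<close> by auto
    then show False using differ by simp
  qed
  moreover have "l \<in> Ess k n g"
  proof (cases "l = j")
    case False
    then have "\<forall>x. x \<noteq> l \<longrightarrow> (a(i := a j)) x = (b(i := b j)) x" using agree by simp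
    then show ?thesis using l tuples differ unfolding Ess_def essential_def by blast
  qed (use j in simp)
  ultimately show "l \<in> Ess k n g - {i}" by blast
qed

lemma ess_ident_less:
  assumes "i \<in> Ess k n g" "j \<in> Ess k n g" "i \<noteq> j"
  shows "ess k n (ident g i j) < ess k n g"
proof -
  have "ess k n (ident g i j) \<le> card (Ess k n g - {i})"
    unfolding ess_def using Ess_ident_subset[OF assms] by (simp add: card_mono finite_Ess)
  also have "\<dots> < ess k n g"
    unfolding ess_def by (rule card_Diff1_less[OF finite_Ess assms(1)])
  finally show ?thesis .
qed

definition Ess_pairs :: "nat \<Rightarrow> nat \<Rightarrow> ((nat \<Rightarrow> nat) \<Rightarrow> nat) \<Rightarrow> (nat \<times> nat) set" where
  "Ess_pairs k n g = {(i, j). j < i \<and> i \<in> Ess k n g \<and> j \<in> Ess k n g}"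

lemma card_Ess_pairs: "card (Ess_pairs k n g) = ess k n g choose 2"
  unfolding Ess_pairs_def ess_def by (rule card_ordered_pairs[OF finite_Ess])

lemma ess_ident_less_of_Ess_pairs:
  "(i, j) \<in> Ess_pairs k n g \<Longrightarrow> ess k n (ident g i j) < ess k n g"
  by (intro ess_ident_less) (auto simp: Ess_pairs_def)

lemma cmr_aux_Suc_sum:
  assumes "3 \<le> ess k n g"
  shows "cmr_aux k n (Suc m) g = (\<Sum>(i, j)\<in>Ess_pairs k n g. cmr_aux k n m (ident g i j))"
  using assms by (simp add: Ess_pairs_def)

lemma cmr_aux_lower_bound: "ess k n g \<le> m \<Longrightarrow> max 1 (ess k n g choose 2) \<le> cmr_aux k n m g"
proof (induction m arbitrary: g)
  case 0
  then show ?case by simp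
next
  case (Suc m)
  show ?case
  proof (cases "3 \<le> ess k n g")
    case True
    let ?S = "Ess_pairs k n g"
    have term_pos: "1 \<le> cmr_aux k n m (ident g i j)" if "(i, j) \<in> ?S" for i j
    proof -
      from that have "ess k n (ident g i j) < ess k n g"
        by (rule ess_ident_less_of_Ess_pairs)
      then show ?thesis
        using Suc by (metis less_Suc_eq_le max.bounded_iff order.strict_trans2)
    qed
    have "card ?S \<le> cmr_aux k n (Suc m) g"
      unfolding cmr_aux_Suc_sum[OF True]
      using sum_bounded_below[of ?S 1 "\<lambda>(i, j). cmr_aux k n m (ident g i j)"] term_pos by auto
    moreover have "1 \<le> card ?S"
      using True by (simp add: card_Ess_pairs Suc_leI zero_less_binomial_iff)
    ultimately show ?thesis by (simp add: card_Ess_pairs)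
  next
    case False
    then consider "ess k n g \<le> 1" | "ess k n g = 2" by linarith
    then show ?thesis by cases (simp_all add: choose_two)
  qed
qed

lemma cmr_aux_le_cmr_bound: "ess k n g \<le> m \<Longrightarrow> cmr_aux k n m g \<le> cmr_bound (ess k n g)"
proof (induction m arbitrary: g)
  case 0
  then show ?case by (simp add: cmr_bound_def)
next
  case (Suc m)
  show ?case
  proof (cases "3 \<le> ess k n g")
    case True
    let ?S = "Ess_pairs k n g"
    have term_le: "cmr_aux k n m (ident g i j) \<le> cmr_bound (ess k n g - 1)"
      if "(i, j) \<in> ?S" for i j
    proof -
      from that have "ess k n (ident g i j) < ess k n g"
        by (rule ess_ident_less_of_Ess_pairs)
      then have "ess k n (ident g i j) \<le> m" "ess k n (ident g i j) \<le> ess k n g - 1"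
        using Suc.prems by linarith+
      then show ?thesis
        using Suc.IH cmr_bound_mono order_trans by blast
    qed
    have "cmr_aux k n (Suc m) g \<le> card ?S * cmr_bound (ess k n g - 1)"
      unfolding cmr_aux_Suc_sum[OF True] of_nat_sum
      using sum_bounded_above[of ?S "\<lambda>p. real ((\<lambda>(i, j). cmr_aux k n m (ident g i j)) p)"] term_le
      by auto
    also have "\<dots> = cmr_bound (ess k n g)"
      using cmr_bound_Suc[of "ess k n g - 1"] True by (simp add: card_Ess_pairs)
    finally show ?thesis .
  next
    case False
    then consider "ess k n g = 0" | "ess k n g = 1" | "ess k n g = 2" by linarith
    then show ?thesis by cases (simp_all add: cmr_bound_def)
  qed
qed

definition var_maps :: "nat \<Rightarrow> (nat \<Rightarrow> nat) set" where
  "var_maps n = {s. (\<forall>x<n. s x < n) \<and> (\<forall>x\<ge>n. s x = x)}"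

definition canonical_var_maps :: "nat \<Rightarrow> (nat \<Rightarrow> nat) set" where
  "canonical_var_maps n = {c. (\<forall>x<n. c x \<le> x) \<and> (\<forall>x\<ge>n. c x = x)}"

lemma comp_in_var_maps: "s \<in> var_maps n \<Longrightarrow> t \<in> var_maps n \<Longrightarrow> t \<circ> s \<in> var_maps n"
  by (simp add: var_maps_def)

lemma comp_permutes_in_tuples:
  assumes "a \<in> tuples k n" "\<pi> permutes {..<n}"
  shows "a \<circ> \<pi> \<in> tuples k n"
  unfolding tuples_def mem_Collect_eq
proof (intro conjI allI impI)
  fix i assume "i < n"
  then have "\<pi> i < n"
    using permutes_in_image[OF assms(2), of i] by simp
  then show "(a \<circ> \<pi>) i < k"
    using assms(1) by (simp add: tuples_def)
next
  fix i assume "n \<le> i"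
  then have "\<pi> i = i"
    by (intro permutes_not_in[OF assms(2)]) simp
  then show "(a \<circ> \<pi>) i = 0"
    using assms(1) \<open>n \<le> i\<close> by (simp add: tuples_def)
qed

lemma ident_eq_comp: "ident g i j = (\<lambda>a. g (a \<circ> id(i := j)))"
  by (simp add: ident_def fun_upd_comp)

lemma minor_step_eq_comp:
  assumes "minor_step k n g h"
  shows "\<exists>t\<in>var_maps n. h = (\<lambda>a. g (a \<circ> t))"
proof -
  obtain i j where "i \<in> Ess k n g" "j \<in> Ess k n g" "h = ident g i j"
    using assms by (auto simp: minor_step_def)
  moreover from this have "i < n" "j < n"
    using Ess_subset_lessThan by blast+
  then have "id(i := j) \<in> var_maps n"
    by (simp add: var_maps_def)
  ultimately show ?thesis by (auto simp: ident_eq_comp)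
qed

lemma Mnr_eq_comp:
  assumes "h \<in> Mnr k n f"
  shows "\<exists>s\<in>var_maps n. h = (\<lambda>a. f (a \<circ> s))"
  using assms unfolding Mnr_def mem_Collect_eq
proof (induction rule: tranclp_induct)
  case (base h)
  then show ?case by (rule minor_step_eq_comp)
next
  case (step g h)
  obtain s where s: "s \<in> var_maps n" "g = (\<lambda>a. f (a \<circ> s))"
    using step.IH by blast
  obtain t where t: "t \<in> var_maps n" "h = (\<lambda>a. g (a \<circ> t))"
    using minor_step_eq_comp[OF step.hyps(2)] by blast
  have "h = (\<lambda>a. f (a \<circ> (t \<circ> s)))"
    using s(2) t(2) by (simp add: o_assoc)
  then show ?case
    using comp_in_var_maps[OF s(1) t(1)] by blast
qed

text \<open>The canonical factor sends each variable to the least variable with the same image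
  under \<open>s\<close>; \<open>s\<close> is injective on the range of that factor, and its restriction there extends
  to a permutation.\<close>

lemma var_map_decompose:
  assumes "s \<in> var_maps n"
  obtains \<pi> c where "\<pi> permutes {..<n}" "c \<in> canonical_var_maps n" "s = \<pi> \<circ> c"
proof -
  define c where "c x = (if x < n then LEAST y. s y = s x else x)" for x
  have s_c: "s (c x) = s x" if "x < n" for x
    using that LeastI[of "\<lambda>y. s y = s x" x] by (simp add: c_def)
  have c_le: "c x \<le> x" for x
    by (simp add: c_def Least_le)
  have "c \<in> canonical_var_maps n"
    by (simp add: canonical_var_maps_def c_le) (simp add: c_def)
  define L where "L = c ` {..<n}"
  have "L \<subseteq> {..<n}"
    using c_le by (auto simp: L_def intro: le_less_trans[of "c x" x n for x])
  moreover have "inj_on s L"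
  proof (rule inj_onI)
    fix y y' assume "y \<in> L" "y' \<in> L" "s y = s y'"
    then obtain x x' where "x < n" "x' < n" "y = c x" "y' = c x'" "s x = s x'"
      by (auto simp: L_def s_c)
    then show "y = y'" by (simp add: c_def)
  qed
  moreover have "s ` L \<subseteq> {..<n}"
    using \<open>L \<subseteq> {..<n}\<close> assms by (auto simp: var_maps_def)
  ultimately obtain \<pi> where \<pi>: "\<pi> permutes {..<n}" "\<And>x. x \<in> L \<Longrightarrow> \<pi> x = s x"
    using exists_permutes_extending[of "{..<n}" L s] by blast
  have "s = \<pi> \<circ> c"
  proof (rule ext)
    fix x
    show "s x = (\<pi> \<circ> c) x"
    proof (cases "x < n")
      case True
      then show ?thesis using \<pi>(2) s_c by (simp add: L_def)
    next
      case False
      then show ?thesis using \<pi>(1) assms by (simp add: c_def var_maps_def permutes_not_in)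
    qed
  qed
  with \<pi>(1) \<open>c \<in> canonical_var_maps n\<close> show ?thesis by (rule that)
qed

lemma card_canonical_var_maps: "card (canonical_var_maps n) = fact n"
proof -
  have "bij_betw (\<lambda>c. restrict c {..<n}) (canonical_var_maps n) (PiE {..<n} (\<lambda>x. {..x}))"
  proof (rule bij_betw_byWitness[where f' = "\<lambda>u x. if x < n then u x else x"])
    show "\<forall>c\<in>canonical_var_maps n. (\<lambda>x. if x < n then restrict c {..<n} x else x) = c"
      by (auto simp: canonical_var_maps_def fun_eq_iff)
    show "\<forall>u\<in>PiE {..<n} (\<lambda>x. {..x}). restrict (\<lambda>x. if x < n then u x else x) {..<n} = u"
      by (auto simp: fun_eq_iff PiE_def extensional_def)
    show "(\<lambda>c. restrict c {..<n}) ` canonical_var_maps n \<subseteq> PiE {..<n} (\<lambda>x. {..x})"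
      by (intro image_subsetI restrict_PiE) (auto simp: canonical_var_maps_def)
    show "(\<lambda>u x. if x < n then u x else x) ` PiE {..<n} (\<lambda>x. {..x}) \<subseteq> canonical_var_maps n"
      by (auto simp: canonical_var_maps_def PiE_def Pi_def)
  qed
  then have "card (canonical_var_maps n) = (\<Prod>x<n. card {..x})"
    by (simp add: bij_betw_same_card card_PiE)
  also have "\<dots> = fact n"
    by (simp add: fact_prod_Suc atLeast0LessThan)
  finally show ?thesis .
qed

lemma finite_canonical_var_maps: "finite (canonical_var_maps n)"
  using card_canonical_var_maps[of n] by (intro card_ge_0_finite) simp

lemma fequiv_sym:
  assumes "fequiv k n g h"
  shows "fequiv k n h g"
proof -
  obtain \<pi> where \<pi>: "\<pi> permutes {..<n}" and h: "\<And>a. a \<in> tuples k n \<Longrightarrow> h a = g (a \<circ> \<pi>)"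
    using assms by (auto simp: fequiv_def)
  have "g a = h (a \<circ> inv \<pi>)" if "a \<in> tuples k n" for a
    using h[OF comp_permutes_in_tuples[OF that permutes_inv[OF \<pi>]]] permutes_inv_o(2)[OF \<pi>]
    by (simp add: comp_assoc)
  then show ?thesis
    using permutes_inv[OF \<pi>] by (auto simp: fequiv_def)
qed

lemma fequiv_trans:
  assumes "fequiv k n g h" "fequiv k n h l"
  shows "fequiv k n g l"
proof -
  obtain \<pi> where \<pi>: "\<pi> permutes {..<n}" and h: "\<And>a. a \<in> tuples k n \<Longrightarrow> h a = g (a \<circ> \<pi>)"
    using assms(1) by (auto simp: fequiv_def)
  obtain \<rho> where \<rho>: "\<rho> permutes {..<n}" and l: "\<And>a. a \<in> tuples k n \<Longrightarrow> l a = h (a \<circ> \<rho>)"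
    using assms(2) by (auto simp: fequiv_def)
  have "l a = g (a \<circ> (\<rho> \<circ> \<pi>))" if "a \<in> tuples k n" for a
    using l[OF that] h[OF comp_permutes_in_tuples[OF that \<rho>]] by (simp add: o_assoc)
  then show ?thesis
    using permutes_compose[OF \<pi> \<rho>] by (auto simp: fequiv_def)
qed

definition minor_class ::
    "nat \<Rightarrow> nat \<Rightarrow> ((nat \<Rightarrow> nat) \<Rightarrow> nat) \<Rightarrow> ((nat \<Rightarrow> nat) \<Rightarrow> nat) \<Rightarrow> ((nat \<Rightarrow> nat) \<Rightarrow> nat) set"
  where
  "minor_class k n f g = {h \<in> Mnr k n f. fequiv k n g h}"

lemma mnr_eq_card_minor_classes: "mnr k n f = card (minor_class k n f ` Mnr k n f)"
  by (simp add: mnr_def minor_class_def image_def)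

lemma minor_class_cong: "fequiv k n g r \<Longrightarrow> minor_class k n f g = minor_class k n f r"
  unfolding minor_class_def using fequiv_sym fequiv_trans by blast

lemma minor_classes_subset_canonical:
  "minor_class k n f ` Mnr k n f \<subseteq> (\<lambda>c. minor_class k n f (\<lambda>a. f (a \<circ> c))) ` canonical_var_maps n"
proof
  fix C assume "C \<in> minor_class k n f ` Mnr k n f"
  then obtain g where "g \<in> Mnr k n f" and C: "C = minor_class k n f g" by blast
  then obtain s where s: "s \<in> var_maps n" and g: "g = (\<lambda>a. f (a \<circ> s))"
    using Mnr_eq_comp by blast
  obtain \<pi> c where "\<pi> permutes {..<n}" "c \<in> canonical_var_maps n" "s = \<pi> \<circ> c"
    using var_map_decompose[OF s] .
  then have "fequiv k n (\<lambda>a. f (a \<circ> c)) g"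
    unfolding fequiv_def g by (auto simp: o_assoc)
  then have "C = minor_class k n f (\<lambda>a. f (a \<circ> c))"
    using C minor_class_cong fequiv_sym by metis
  with \<open>c \<in> canonical_var_maps n\<close>
  show "C \<in> (\<lambda>c. minor_class k n f (\<lambda>a. f (a \<circ> c))) ` canonical_var_maps n"
    by blast
qed

lemma finite_minor_classes: "finite (minor_class k n f ` Mnr k n f)"
  by (rule finite_subset[OF minor_classes_subset_canonical])
    (intro finite_imageI finite_canonical_var_maps)

lemma mnr_le_fact: "mnr k n f \<le> fact n"
proof -
  have "mnr k n f \<le> card ((\<lambda>c. minor_class k n f (\<lambda>a. f (a \<circ> c))) ` canonical_var_maps n)"
    unfolding mnr_eq_card_minor_classes
    by (intro card_mono finite_imageI finite_canonical_var_maps minor_classes_subset_canonical)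
  also have "\<dots> \<le> card (canonical_var_maps n)"
    by (rule card_image_le[OF finite_canonical_var_maps])
  finally show ?thesis
    by (simp add: card_canonical_var_maps)
qed

lemma mnr_pos:
  assumes "2 \<le> ess k n f"
  shows "1 \<le> mnr k n f"
proof -
  obtain T where "T \<subseteq> Ess k n f" "card T = 2"
    using assms unfolding ess_def by (rule obtain_subset_with_card_n)
  then obtain i j where "i \<in> Ess k n f" "j \<in> Ess k n f" "i \<noteq> j"
    by (auto simp: card_2_iff)
  then have "minor_step k n f (ident f i j)"
    unfolding minor_step_def by blast
  then have "ident f i j \<in> Mnr k n f"
    unfolding Mnr_def mem_Collect_eq by (rule tranclp.r_into_trancl[of "minor_step k n"])
  then have "minor_class k n f ` Mnr k n f \<noteq> {}"
    by blast
  then show ?thesis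
    using finite_minor_classes by (simp add: mnr_eq_card_minor_classes Suc_le_eq card_gt_0_iff)
qed

theorem theorem14:
  fixes k n :: nat and f :: "(nat \<Rightarrow> nat) \<Rightarrow> nat"
  assumes "f \<in> P k n" and "2 \<le> ess k n f" and "ess k n f = n" and "n \<le> k"
  shows "(real (n * (n - 1)) / 2 \<le> real (cmr k n f) \<and>
         real (cmr k n f) \<le> fact n * fact (n - 1) / 2 ^ (n - 2)) \<and>
         (1 \<le> mnr k n f \<and>
         real (mnr k n f) \<le> fact n * fact (n - 1) / 2 ^ (n - 2))"
proof -
  have "n choose 2 \<le> cmr k n f"
    using cmr_aux_lower_bound[of k n f n] assms(3) by (simp add: cmr_def)
  then have lower: "real (n * (n - 1)) / 2 \<le> cmr k n f"
    unfolding real_choose_two[symmetric] of_nat_le_iff .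
  have upper: "cmr k n f \<le> cmr_bound n"
    using cmr_aux_le_cmr_bound[of k n f n] assms(3) by (simp add: cmr_def)
  have "real (mnr k n f) \<le> fact n"
    using mnr_le_fact[of k n f] by (metis of_nat_fact of_nat_le_iff)
  then have "mnr k n f \<le> cmr_bound n"
    using fact_le_cmr_bound[of n] by linarith
  with lower upper mnr_pos[OF assms(2)] show ?thesis
    by (simp add: cmr_bound_def)
qed

end
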